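(* Let $p\ge 5$ be a prime and $k$ an integer with $1\le k\le \frac{p-3}{2}$, and put $t=p-1-2k$. Then, modulo $p$, \[ (-1)^k 4^{2k-1} E_t \equiv 4^t S_t(0, \tfrac{1}{16}) + 2^t S_t(\tfrac{3}{8}, \tfrac{7}{16}) + (2^t + 4^t) S_t(\tfrac{7}{16}, \tfrac{1}{2}). \]
   Context: $E_n$ denotes the $n$th Euler number, defined by $\sec z=\sum_{n\ge0}E_n\frac{z^n}{n!}$ (so $E_2=1$, $E_4=5$). For a prime $p$, an integer $\ell$ and real numbers $0\le x<y\le 1$, $S_\ell(x,y)=\sum_{xp<s<yp} s^\ell$, the sum over integers $s$ strictly between $xp$ and $yp$. Congruences between rational numbers modulo $p$ mean that the difference has $p$-adic valuation at least $1$. *)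

theory Defs
  imports "HOL-Computational_Algebra.Formal_Power_Series"
begin

definition euler_num :: "nat \<Rightarrow> rat" where
  "euler_num n = fact n * fps_nth (inverse (fps_cos (1::rat))) n"

definition S_sum :: "nat \<Rightarrow> nat \<Rightarrow> rat \<Rightarrow> rat \<Rightarrow> rat" where
  "S_sum p l x y = (\<Sum>s\<in>{s::int. x * of_nat p < of_int s \<and> of_int s < y * of_nat p}. (of_int s) ^ l)"

text \<open>Congruence of rationals mod p: the difference has p-adic valuation at least 1
  (numerator of the reduced fraction divisible by p; covers difference 0).\<close>
definition rat_cong :: "rat \<Rightarrow> rat \<Rightarrow> nat \<Rightarrow> bool" where
  "rat_cong a b p = (int p dvd fst (quotient_of (a - b)))"

end

theory Submission
  imports Defs "HOL-Number_Theory.Number_Theory"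
begin

(*
  Let s_n = (-1)^(n/2) E_n, so that sech z = 2 / (e^z + e^-z) = sum s_n z^n / n!, and let chi
  be the non-principal character mod 4.  Multiplying the telescoping identity
  sum_{b<2M} (-1)^b e^((2b+1)z) (e^z + e^-z) = 1 - e^(4Mz) by sech z gives
    2 sum_{a<4M} chi(a) a^n = s_n - sum_i C(n,i) (4M)^i s_(n-i).
  For M = p, reading this modulo p^2 and cutting [0,4p) into four blocks of length p shows
  s_t = sum_{0<=r<p} (chi(r) + chi(r+p)) r^t (mod p) for t + 1 < p.  Since power sums over
  (0,p) vanish mod p and r -> p - r preserves r^t for even t, the right side is
  4 chi(p) sum_{0<r<p, r = p mod 4} r^t.  Finally s -> p - 16s, 8s - 3p and 16s - 7p map the
  three intervals of the statement onto the residues r = p mod 16, r = p + 4 mod 8 and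
  r = p + 8 mod 16 in (0,p), which together make up the class r = p mod 4.
*)

section \<open>Euler numbers and the coefficients of sech\<close>

lemma fps_cos_times_euler_num:
  "(\<Sum>i\<le>n. fps_nth (fps_cos (1::rat)) i * (euler_num (n - i) / fact (n - i))) = of_bool (n = 0)"
proof -
  have "fps_cos (1::rat) * inverse (fps_cos 1) = 1"
    by (rule inverse_mult_eq_1') simp
  then have "fps_nth (fps_cos 1 * inverse (fps_cos (1::rat))) n = fps_nth 1 n"
    by simp
  then show ?thesis
    by (simp add: fps_mult_nth euler_num_def atLeast0AtMost)
qed

(* n! times the n-th Taylor coefficient of sech z = sec (i z). *)
definition sech_num :: "nat \<Rightarrow> rat" where
  "sech_num n = (if even n then (-1) ^ (n div 2) * euler_num n else 0)"

definition fps_sech :: "rat fps" where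
  "fps_sech = Abs_fps (\<lambda>n. sech_num n / fact n)"

lemma fps_sech_nth [simp]: "fps_nth fps_sech n = sech_num n / fact n"
  by (simp add: fps_sech_def)

lemma minus_one_power_half_diff:
  assumes "even n" "even i" "i \<le> n"
  shows "(-1::'a::ring_1) ^ ((n - i) div 2) = (-1) ^ (n div 2) * (-1) ^ (i div 2)"
proof -
  obtain a b where ab: "n = 2 * a" "i = 2 * b"
    using assms(1,2) by (auto elim!: evenE)
  with assms(3) have "a = (a - b) + b"
    by simp
  then have "(-1::'a) ^ a * (-1) ^ b = (-1) ^ (a - b) * ((-1) ^ b * (-1) ^ b)"
    by (metis power_add mult.assoc)
  also have "(-1::'a) ^ b * (-1) ^ b = 1"
    by (simp flip: power_add)
  finally show ?thesis
    using ab by (simp flip: diff_mult_distrib2)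
qed

lemma fps_cosh_mult_sech: "(fps_exp 1 + fps_exp (-1)) * fps_sech = 2"
proof (rule fps_ext)
  fix n
  have coeff_eq: "(1 / fact i + (-1) ^ i / fact i) * (sech_num (n - i) / fact (n - i))
      = 2 * of_bool (even n) * (-1) ^ (n div 2)
          * (fps_nth (fps_cos 1) i * (euler_num (n - i) / fact (n - i)))"
    if "i \<le> n" for i
  proof (cases "even i")
    case True
    with that show ?thesis
      by (cases "even n") (auto simp: sech_num_def fps_cos_def minus_one_power_half_diff)
  qed (simp add: fps_cos_def)
  have "fps_nth ((fps_exp 1 + fps_exp (-1)) * fps_sech) n
      = (\<Sum>i\<le>n. (1 / fact i + (-1) ^ i / fact i) * (sech_num (n - i) / fact (n - i)))"
    by (simp add: fps_mult_nth atLeast0AtMost)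
  also have "\<dots> = 2 * of_bool (even n) * (-1) ^ (n div 2)
      * (\<Sum>i\<le>n. fps_nth (fps_cos 1) i * (euler_num (n - i) / fact (n - i)))"
    unfolding sum_distrib_left by (intro sum.cong refl coeff_eq) simp
  also have "\<dots> = 2 * of_bool (even n) * (-1) ^ (n div 2) * of_bool (n = 0)"
    by (simp only: fps_cos_times_euler_num)
  also have "\<dots> = fps_nth 2 n"
    by (simp add: fps_numeral_nth)
  finally show "fps_nth ((fps_exp 1 + fps_exp (-1)) * fps_sech) n = fps_nth 2 n" .
qed

lemma sech_num_recurrence:
  "(\<Sum>i\<le>n. of_bool (even i) * of_nat (n choose i) * sech_num (n - i)) = of_bool (n = 0)"
proof -
  have coeff_eq: "fact n / 2 * ((1 / fact i + (-1) ^ i / fact i) * (sech_num (n - i) / fact (n - i)))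
      = of_bool (even i) * of_nat (n choose i) * sech_num (n - i)" if "i \<le> n" for i
    using that by (cases "even i") (simp_all add: binomial_fact field_simps)
  have "(\<Sum>i\<le>n. (1 / fact i + (-1) ^ i / fact i) * (sech_num (n - i) / fact (n - i)))
      = 2 * of_bool (n = 0)"
  proof -
    have "fps_nth ((fps_exp 1 + fps_exp (-1)) * fps_sech) n = 2 * of_bool (n = 0)"
      by (simp add: fps_cosh_mult_sech fps_numeral_nth)
    then show ?thesis
      by (simp only: fps_mult_nth fps_add_nth fps_exp_nth fps_sech_nth
          atLeast0AtMost power_one of_nat_fact)
  qed
  then have "(\<Sum>i\<le>n. fact n / 2 * ((1 / fact i + (-1) ^ i / fact i) * (sech_num (n - i) / fact (n - i))))
      = fact n / 2 * (2 * of_bool (n = 0))"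
    by (simp only: sum_distrib_left[symmetric])
  also have "(\<Sum>i\<le>n. fact n / 2 * ((1 / fact i + (-1) ^ i / fact i) * (sech_num (n - i) / fact (n - i))))
      = (\<Sum>i\<le>n. of_bool (even i) * of_nat (n choose i) * sech_num (n - i))"
    by (intro sum.cong refl coeff_eq) simp
  finally show ?thesis
    by (cases "n = 0") simp_all
qed

lemma sech_num_Ints: "sech_num n \<in> \<int>"
proof (induction n rule: less_induct)
  case (less n)
  have "{..n} = insert 0 {0<..n}"
    by auto
  then have "sech_num n + (\<Sum>i\<in>{0<..n}. of_bool (even i) * of_nat (n choose i) * sech_num (n - i))
      = of_bool (n = 0)"
    using sech_num_recurrence[of n] by simp
  then have "sech_num n = of_bool (n = 0)
      - (\<Sum>i\<in>{0<..n}. of_bool (even i) * of_nat (n choose i) * sech_num (n - i))"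
    by (simp add: algebra_simps)
  also have "\<dots> \<in> \<int>"
    using less by (intro Ints_diff Ints_sum Ints_mult) auto
  finally show ?case .
qed

definition sech_int :: "nat \<Rightarrow> int" where
  "sech_int n = \<lfloor>sech_num n\<rfloor>"

lemma of_int_sech_int [simp]: "of_int (sech_int n) = sech_num n"
  using sech_num_Ints[of n] by (auto simp: sech_int_def elim!: Ints_cases)

section \<open>Character sums modulo the square of a prime\<close>

lemma fps_exp_alternating_odd_telescope:
  "(\<Sum>b<N. fps_const ((-1) ^ b) * fps_exp (of_nat (2 * b + 1))) * (fps_exp 1 + fps_exp (-1))
     = 1 - fps_const ((-1) ^ N) * fps_exp (of_nat (2 * N) :: 'a::field_char_0)"
proof (induction N)
  case (Suc N)
  have "fps_exp (of_nat (2 * N + 1) :: 'a) * (fps_exp 1 + fps_exp (-1))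
      = fps_exp (of_nat (2 * Suc N)) + fps_exp (of_nat (2 * N))"
    by (simp add: distrib_left algebra_simps flip: fps_exp_add_mult)
  then show ?case
    using Suc.IH by (simp add: algebra_simps flip: fps_const_neg)
qed simp

definition chi4 :: "int \<Rightarrow> int" where
  "chi4 a = (if a mod 4 = 1 then 1 else if a mod 4 = 3 then -1 else 0)"

lemma chi4_odd_nat: "odd n \<Longrightarrow> chi4 (int n) = (-1) ^ ((n - 1) div 2)"
  unfolding chi4_def by (cases "even ((n - 1) div 2)") (simp_all; presburger)+

lemma sum_chi4_power_eq_alternating:
  "(\<Sum>a<4 * M. chi4 (int a) * int a ^ n) = (\<Sum>b<2 * M. (-1) ^ b * int (2 * b + 1) ^ n)"
proof (induction M)
  case (Suc M)
  have "4 * Suc M = Suc (Suc (Suc (Suc (4 * M))))" "2 * Suc M = Suc (Suc (2 * M))"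
    by simp_all
  then have "(\<Sum>a<4 * Suc M. chi4 (int a) * int a ^ n) = (\<Sum>a<4 * M. chi4 (int a) * int a ^ n)
      + chi4 (int (4 * M)) * int (4 * M) ^ n + chi4 (int (4 * M + 1)) * int (4 * M + 1) ^ n
      + chi4 (int (4 * M + 2)) * int (4 * M + 2) ^ n + chi4 (int (4 * M + 3)) * int (4 * M + 3) ^ n"
    "(\<Sum>b<2 * Suc M. (-1) ^ b * int (2 * b + 1) ^ n) = (\<Sum>b<2 * M. (-1) ^ b * int (2 * b + 1) ^ n)
      + (-1) ^ (2 * M) * int (4 * M + 1) ^ n + (-1) ^ (2 * M + 1) * int (4 * M + 3) ^ n"
    by (simp_all only: sum.lessThan_Suc) (simp_all add: algebra_simps)
  moreover have "chi4 (int (4 * M)) = 0" "chi4 (int (4 * M + 1)) = 1"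
    "chi4 (int (4 * M + 2)) = 0" "chi4 (int (4 * M + 3)) = -1"
    unfolding chi4_def by presburger+
  ultimately show ?case
    using Suc.IH by simp
qed simp

lemma fact_times_fps_exp_mult_sech_nth:
  "fact n * fps_nth (fps_exp c * fps_sech) n = (\<Sum>i\<le>n. of_nat (n choose i) * c ^ i * sech_num (n - i))"
proof -
  have "fact n * (c ^ i / fact i * (sech_num (n - i) / fact (n - i)))
      = of_nat (n choose i) * c ^ i * sech_num (n - i)" if "i \<le> n" for i
    using that by (simp add: binomial_fact field_simps)
  then show ?thesis
    by (simp add: fps_mult_nth atLeast0AtMost sum_distrib_left)
qed

lemma sum_chi4_power_sech:
  "2 * (\<Sum>a<4 * M. chi4 (int a) * int a ^ n)
     = sech_int n - (\<Sum>i\<le>n. int (n choose i) * int (4 * M) ^ i * sech_int (n - i))"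
proof -
  define A :: "rat fps" where
    "A = (\<Sum>b<2 * M. fps_const ((-1) ^ b) * fps_exp (of_nat (2 * b + 1)))"
  have "A * (fps_exp 1 + fps_exp (-1)) = 1 - fps_exp (of_nat (4 * M))"
    using fps_exp_alternating_odd_telescope[of "2 * M"] by (simp add: A_def)
  then have "2 * A = (1 - fps_exp (of_nat (4 * M))) * fps_sech"
    by (metis fps_cosh_mult_sech mult.assoc mult.commute)
  then have "fact n * fps_nth (2 * A) n = fact n * fps_nth (fps_sech - fps_exp (of_nat (4 * M)) * fps_sech) n"
    by (simp only: left_diff_distrib mult_1_left)
  moreover have "fact n * fps_nth (2 * A) n = 2 * (\<Sum>b<2 * M. (-1) ^ b * of_nat (2 * b + 1) ^ n)"
    by (simp add: A_def fps_sum_nth sum_distrib_left numeral_fps_const)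
  ultimately have "rat_of_int (2 * (\<Sum>b<2 * M. (-1) ^ b * int (2 * b + 1) ^ n))
      = of_int (sech_int n - (\<Sum>i\<le>n. int (n choose i) * int (4 * M) ^ i * sech_int (n - i)))"
    using fact_times_fps_exp_mult_sech_nth[of n "of_nat (4 * M)"] by (simp add: right_diff_distrib)
  then show ?thesis
    by (simp only: of_int_eq_iff sum_chi4_power_eq_alternating)
qed

lemma square_dvd_power_add_sub_linear:
  fixes x y :: "'a::comm_ring_1"
  shows "y\<^sup>2 dvd (x + y) ^ n - x ^ n - of_nat n * y * x ^ (n - 1)"
proof (induction n)
  case (Suc n)
  then obtain K where K: "(x + y) ^ n - x ^ n - of_nat n * y * x ^ (n - 1) = y\<^sup>2 * K"
    by (auto elim!: dvdE)
  show ?case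
  proof (cases n)
    case (Suc m)
    have "(x + y) ^ Suc n - x ^ Suc n - of_nat (Suc n) * y * x ^ (Suc n - 1)
        = y\<^sup>2 * ((x + y) * K + of_nat n * x ^ m)"
      using K Suc by (simp add: algebra_simps power2_eq_square eq_diff_eq)
    then show ?thesis
      by simp
  qed simp
qed simp

lemma chi4_add_twice_odd: "odd P \<Longrightarrow> chi4 (x + 2 * P) = - chi4 x"
  unfolding chi4_def by presburger

lemma square_dvd_chi4_block:
  assumes "odd P"
  shows "P\<^sup>2 dvd (\<Sum>j<4. chi4 (x + int j * P) * (x + int j * P) ^ n)
                  + 2 * int n * P * (chi4 x + chi4 (x + P)) * x ^ (n - 1)"
proof -
  obtain K1 K2 K3 where
    K1: "(x + 1 * P) ^ n - x ^ n - of_nat n * (1 * P) * x ^ (n - 1) = (1 * P)\<^sup>2 * K1" and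
    K2: "(x + 2 * P) ^ n - x ^ n - of_nat n * (2 * P) * x ^ (n - 1) = (2 * P)\<^sup>2 * K2" and
    K3: "(x + 3 * P) ^ n - x ^ n - of_nat n * (3 * P) * x ^ (n - 1) = (3 * P)\<^sup>2 * K3"
    by (metis dvdE square_dvd_power_add_sub_linear)
  have sum4: "(\<Sum>j<4. chi4 (x + int j * P) * (x + int j * P) ^ n)
      = chi4 x * x ^ n + chi4 (x + P) * (x + P) ^ n
        + chi4 (x + 2 * P) * (x + 2 * P) ^ n + chi4 (x + 3 * P) * (x + 3 * P) ^ n"
    by (simp add: eval_nat_numeral)
  have chi4_shift: "chi4 (x + 2 * P) = - chi4 x" "chi4 (x + 3 * P) = - chi4 (x + P)"
    using chi4_add_twice_odd[OF assms, of x] chi4_add_twice_odd[OF assms, of "x + P"]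
    by (simp_all add: add_ac)
  have "(\<Sum>j<4. chi4 (x + int j * P) * (x + int j * P) ^ n)
                  + 2 * int n * P * (chi4 x + chi4 (x + P)) * x ^ (n - 1)
      = P\<^sup>2 * (chi4 (x + P) * (K1 - 9 * K3) - 4 * chi4 x * K2)"
    unfolding sum4 chi4_shift using K1 K2 K3 by (simp add: algebra_simps power2_eq_square eq_diff_eq)
  then show ?thesis
    by simp
qed

lemma square_dvd_sum_chi4_power_blocks:
  assumes "odd p"
  shows "(int p)\<^sup>2 dvd (\<Sum>a<4 * p. chi4 (int a) * int a ^ n)
           + 2 * int n * int p * (\<Sum>r<p. (chi4 (int r) + chi4 (int r + int p)) * int r ^ (n - 1))"
proof -
  define g where "g a = chi4 (int a) * int a ^ n" for a
  have block: "(\<Sum>a\<in>{j * p..<j * p + p}. g a) = (\<Sum>r<p. g (r + j * p))" for j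
    using sum.shift_bounds_nat_ivl[of g 0 "j * p" p] by (simp add: add.commute atLeast0LessThan)
  have "(\<Sum>a<4 * p. g a) = (\<Sum>j<4. \<Sum>r<p. g (r + j * p))"
    using sum.nat_group[of g p 4] by (simp add: block mult.commute)
  also have "\<dots> = (\<Sum>r<p. \<Sum>j<4. chi4 (int r + int j * int p) * (int r + int j * int p) ^ n)"
    by (subst sum.swap) (simp add: g_def)
  finally have "(\<Sum>a<4 * p. chi4 (int a) * int a ^ n)
      + 2 * int n * int p * (\<Sum>r<p. (chi4 (int r) + chi4 (int r + int p)) * int r ^ (n - 1))
    = (\<Sum>r<p. (\<Sum>j<4. chi4 (int r + int j * int p) * (int r + int j * int p) ^ n)
        + 2 * int n * int p * (chi4 (int r) + chi4 (int r + int p)) * int r ^ (n - 1))"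
    by (simp add: g_def sum.distrib sum_distrib_left mult.assoc)
  also have "(int p)\<^sup>2 dvd \<dots>"
    using assms by (intro dvd_sum square_dvd_chi4_block) simp
  finally show ?thesis .
qed

lemma odd_prime_not_dvd_power_2:
  assumes "prime p" "odd p"
  shows "\<not> int p dvd 2 ^ k"
proof
  assume "int p dvd 2 ^ k"
  then have "p dvd 2 ^ k"
    by (metis int_dvd_int_iff of_nat_numeral of_nat_power)
  then have "p = 2"
    using assms(1) prime_dvd_power primes_dvd_imp_eq two_is_prime_nat by blast
  with assms(2) show False
    by simp
qed

lemma square_dvd_sum_chi4_power_sech:
  "(int p)\<^sup>2 dvd 2 * (\<Sum>a<4 * p. chi4 (int a) * int a ^ Suc m) + 4 * int (Suc m) * int p * sech_int m"
proof -
  define n where "n = Suc m"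
  define f where "f i = int (n choose i) * int (4 * p) ^ i * sech_int (n - i)" for i
  have "{..n} = {0, 1} \<union> {2..n}" "{0, 1} \<inter> {2..n} = {}"
    by (auto simp: n_def)
  then have "(\<Sum>i\<le>n. f i) = sech_int n + 4 * int n * int p * sech_int m + (\<Sum>i\<in>{2..n}. f i)"
    by (simp add: sum.union_disjoint f_def n_def)
  moreover have "2 * (\<Sum>a<4 * p. chi4 (int a) * int a ^ n) = sech_int n - (\<Sum>i\<le>n. f i)"
    unfolding f_def by (rule sum_chi4_power_sech)
  ultimately have "2 * (\<Sum>a<4 * p. chi4 (int a) * int a ^ n) + 4 * int n * int p * sech_int m
      = - (\<Sum>i\<in>{2..n}. f i)"
    by simp
  moreover have "(int p)\<^sup>2 dvd (\<Sum>i\<in>{2..n}. f i)"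
  proof (rule dvd_sum)
    fix i assume "i \<in> {2..n}"
    then have "(int (4 * p))\<^sup>2 dvd int (4 * p) ^ i"
      by (intro le_imp_power_dvd) simp
    then have "(int p)\<^sup>2 dvd int (4 * p) ^ i"
      by (rule dvd_trans[rotated]) (simp add: power_mult_distrib)
    then show "(int p)\<^sup>2 dvd f i"
      unfolding f_def by (intro dvd_mult2 dvd_mult)
  qed
  ultimately show ?thesis
    by (simp add: n_def)
qed

lemma sech_int_cong_chi4_sum:
  assumes "prime p" "odd p" "m + 1 < p"
  shows "[sech_int m = (\<Sum>r<p. (chi4 (int r) + chi4 (int r + int p)) * int r ^ m)] (mod int p)"
proof -
  define G where "G = (\<Sum>a<4 * p. chi4 (int a) * int a ^ Suc m)"
  define X where "X = (\<Sum>r<p. (chi4 (int r) + chi4 (int r + int p)) * int r ^ m)"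
  have "(int p)\<^sup>2 dvd 2 * G + 4 * int (Suc m) * int p * sech_int m"
    unfolding G_def by (rule square_dvd_sum_chi4_power_sech)
  moreover have "(int p)\<^sup>2 dvd G + 2 * int (Suc m) * int p * X"
    using square_dvd_sum_chi4_power_blocks[OF assms(2), of "Suc m"] by (simp add: G_def X_def)
  ultimately have "(int p)\<^sup>2 dvd (2 * G + 4 * int (Suc m) * int p * sech_int m)
      - 2 * (G + 2 * int (Suc m) * int p * X)"
    by (intro dvd_diff dvd_mult)
  then have "int p * int p dvd int p * (2 ^ 2 * int (Suc m) * (sech_int m - X))"
    by (simp add: algebra_simps power2_eq_square)
  then have "int p dvd 2 ^ 2 * int (Suc m) * (sech_int m - X)"
    using assms(1) by (simp add: prime_gt_0_nat)
  moreover have "prime (int p)"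
    using assms(1) by simp
  moreover have "\<not> int p dvd 2 ^ 2"
    using assms(1,2) by (rule odd_prime_not_dvd_power_2)
  moreover have "\<not> int p dvd int (Suc m)"
    using assms(3) by (auto dest: zdvd_imp_le)
  ultimately have "int p dvd sech_int m - X"
    by (simp only: prime_dvd_mult_iff) blast
  then show ?thesis
    by (simp add: cong_iff_dvd_diff cong_sym_eq X_def)
qed

section \<open>Power sums modulo a prime\<close>

lemma bij_betw_mult_mod_prime:
  fixes P g :: int
  assumes "prime P" "coprime g P"
  shows "bij_betw (\<lambda>r. (g * r) mod P) {0<..<P} {0<..<P}"
proof -
  define h where "h r = (g * r) mod P" for r
  have "inj_on h {0<..<P}"
  proof
    fix r1 r2 assume r: "r1 \<in> {0<..<P}" "r2 \<in> {0<..<P}" "h r1 = h r2"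
    then have "[g * r1 = g * r2] (mod P)"
      by (simp add: h_def cong_def)
    then have "[r1 = r2] (mod P)"
      using assms(2) by (simp add: cong_mult_lcancel)
    with r show "r1 = r2"
      by (intro cong_less_imp_eq_int[of r1 P r2]) auto
  qed
  moreover have "h ` {0<..<P} \<subseteq> {0<..<P}"
  proof safe
    fix r assume "r \<in> {0<..<P}"
    then have "\<not> P dvd g * r"
      using assms by (auto simp: prime_dvd_mult_iff coprime_commute dest: zdvd_imp_le
          intro: coprime_common_divisor)
    then show "h r \<in> {0<..<P}"
      using assms(1) by (auto simp: h_def prime_gt_0_int dvd_eq_mod_eq_0 order_le_neq_trans)
  qed
  ultimately have "h ` {0<..<P} = {0<..<P}"
    by (intro endo_inj_surj) auto
  with \<open>inj_on h {0<..<P}\<close> show ?thesis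
    unfolding h_def[symmetric] bij_betw_def by blast
qed

(* The sum is invariant under multiplication by a primitive root g, and g^t is not 1 mod p. *)
lemma power_sum_prime_dvd:
  assumes "prime p" "\<not> (p - 1) dvd t"
  shows "int p dvd (\<Sum>r\<in>{0<..<int p}. r ^ t)"
proof -
  obtain g0 where "residue_primroot p g0"
    using prime_primitive_root_exists[OF prime_gt_1_nat assms(1)] assms(1) by blast
  then have "coprime p g0" "ord p g0 = p - 1"
    using assms(1) by (auto simp: residue_primroot_def totient_prime)
  define P where "P = int p"
  define g where "g = int g0"
  define T where "T = (\<Sum>r\<in>{0<..<P}. r ^ t)"
  have "prime P"
    using assms(1) by (simp add: P_def)
  moreover have "coprime g P"
    using \<open>coprime p g0\<close> by (simp add: g_def P_def coprime_commute)
  ultimately have "T = (\<Sum>r\<in>{0<..<P}. ((g * r) mod P) ^ t)"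
    unfolding T_def by (rule sum.reindex_bij_betw[OF bij_betw_mult_mod_prime, symmetric])
  also have "[\<dots> = (\<Sum>r\<in>{0<..<P}. g ^ t * r ^ t)] (mod P)"
    by (intro cong_sum) (simp add: cong_pow power_mult_distrib flip: power_mult_distrib)
  also have "(\<Sum>r\<in>{0<..<P}. g ^ t * r ^ t) = g ^ t * T"
    by (simp add: T_def sum_distrib_left)
  finally have "P dvd (g ^ t - 1) * T"
    by (simp add: cong_iff_dvd_diff algebra_simps dvd_diff_commute)
  moreover have "\<not> P dvd g ^ t - 1"
  proof
    assume "P dvd g ^ t - 1"
    then have "[g0 ^ t = 1] (mod p)"
      by (simp add: g_def P_def cong_iff_dvd_diff flip: cong_int_iff)
    with \<open>ord p g0 = p - 1\<close> assms(2) show False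
      by (simp add: ord_divides')
  qed
  ultimately show ?thesis
    using \<open>prime P\<close> by (simp add: prime_dvd_mult_iff T_def P_def)
qed

lemma weighted_power_sum_reflect_cong:
  fixes w :: "int \<Rightarrow> int"
  assumes "even t"
  shows "[(\<Sum>r\<in>{0<..<P}. w r * r ^ t) = (\<Sum>r\<in>{0<..<P}. w (P - r) * r ^ t)] (mod P)"
proof -
  have "(\<Sum>r\<in>{0<..<P}. w r * r ^ t) = (\<Sum>r\<in>{0<..<P}. w (P - r) * (P - r) ^ t)"
    by (rule sum.reindex_bij_witness[of _ "\<lambda>r. P - r" "\<lambda>r. P - r"]) auto
  also have "[\<dots> = (\<Sum>r\<in>{0<..<P}. w (P - r) * (- r) ^ t)] (mod P)"
    by (intro cong_sum cong_mult cong_refl cong_pow) (simp add: cong_iff_dvd_diff)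
  finally show ?thesis
    using assms by simp
qed

lemma odd_power_sum_prime_dvd:
  assumes "prime p" "odd p" "even t" "\<not> (p - 1) dvd t"
  shows "int p dvd (\<Sum>r\<in>{0<..<int p}. of_bool (odd r) * r ^ t)"
proof -
  define S_odd where "S_odd = (\<Sum>r\<in>{0<..<int p}. of_bool (odd r) * r ^ t)"
  define S_even where "S_even = (\<Sum>r\<in>{0<..<int p}. of_bool (even r) * r ^ t)"
  have "S_odd + S_even = (\<Sum>r\<in>{0<..<int p}. r ^ t)"
    unfolding S_odd_def S_even_def sum.distrib[symmetric] by (intro sum.cong) auto
  then have "[S_odd + S_even = 0] (mod int p)"
    using power_sum_prime_dvd[OF assms(1,4)] by (simp add: cong_0_iff)
  moreover have "[S_odd = S_even] (mod int p)"
    using weighted_power_sum_reflect_cong[OF assms(3), of "\<lambda>r. of_bool (odd r)" "int p"] assms(2)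
    by (simp add: S_odd_def S_even_def)
  ultimately have "int p dvd 2 * S_odd"
    by (metis cong_0_iff cong_add_lcancel mult_2 add.commute cong_trans cong_sym)
  then have "int p dvd S_odd"
    using assms(1) odd_prime_not_dvd_power_2[OF assms(1,2), of 1] by (simp add: prime_dvd_mult_iff)
  then show ?thesis
    by (simp only: S_odd_def)
qed

lemma chi4_decomp_odd_modulus:
  "odd P \<Longrightarrow> chi4 r = chi4 P * (2 * of_bool (4 dvd r - P) - of_bool (odd r))"
  unfolding chi4_def by (auto; presburger)

lemma chi4_reflect_odd_modulus: "odd P \<Longrightarrow> chi4 (P - r + P) = chi4 r"
  unfolding chi4_def by presburger

lemma chi4_power_sum_cong_class_sum:
  assumes "prime p" "odd p" "even t" "\<not> (p - 1) dvd t"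
  shows "[(\<Sum>r\<in>{0<..<int p}. chi4 r * r ^ t)
          = 2 * chi4 (int p) * (\<Sum>r\<in>{0<..<int p}. of_bool (4 dvd r - int p) * r ^ t)] (mod int p)"
proof -
  have "(\<Sum>r\<in>{0<..<int p}. chi4 r * r ^ t)
      = 2 * chi4 (int p) * (\<Sum>r\<in>{0<..<int p}. of_bool (4 dvd r - int p) * r ^ t)
        - chi4 (int p) * (\<Sum>r\<in>{0<..<int p}. of_bool (odd r) * r ^ t)"
    unfolding sum_distrib_left sum_subtractf[symmetric]
    by (intro sum.cong refl, subst chi4_decomp_odd_modulus[of "int p"])
      (use assms(2) in \<open>simp_all add: algebra_simps\<close>)
  moreover have "int p dvd (\<Sum>r\<in>{0<..<int p}. of_bool (odd r) * r ^ t)"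
    by (rule odd_power_sum_prime_dvd[OF assms])
  ultimately show ?thesis
    by (simp add: cong_iff_dvd_diff)
qed

lemma sech_int_cong_class_sum:
  assumes "prime p" "odd p" "even t" "0 < t" "t + 1 < p"
  shows "[sech_int t = 4 * chi4 (int p) * (\<Sum>r\<in>{0<..<int p}. of_bool (4 dvd r - int p) * r ^ t)] (mod int p)"
proof -
  have no_div: "\<not> (p - 1) dvd t"
    using assms(4,5) by (auto dest: dvd_imp_le)
  have "int ` {..<p} = insert 0 {0<..<int p}"
    using assms(5) by (auto simp: image_int_atLeastLessThan lessThan_atLeast0)
  then have "(\<Sum>r<p. (chi4 (int r) + chi4 (int r + int p)) * int r ^ t)
      = (\<Sum>r\<in>{0<..<int p}. (chi4 r + chi4 (r + int p)) * r ^ t)"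
    using sum.reindex[of int "{..<p}" "\<lambda>r. (chi4 r + chi4 (r + int p)) * r ^ t"] assms(4)
    by (simp add: power_0_left)
  also have "\<dots> = (\<Sum>r\<in>{0<..<int p}. chi4 r * r ^ t)
      + (\<Sum>r\<in>{0<..<int p}. chi4 (r + int p) * r ^ t)"
    by (simp add: distrib_right sum.distrib)
  also have "[\<dots> = (\<Sum>r\<in>{0<..<int p}. chi4 r * r ^ t)
      + (\<Sum>r\<in>{0<..<int p}. chi4 r * r ^ t)] (mod int p)"
    using weighted_power_sum_reflect_cong[OF assms(3), of "\<lambda>r. chi4 (r + int p)" "int p"]
      chi4_reflect_odd_modulus[of "int p"] assms(2)
    by (intro cong_add cong_refl) simp
  also have "[(\<Sum>r\<in>{0<..<int p}. chi4 r * r ^ t) + (\<Sum>r\<in>{0<..<int p}. chi4 r * r ^ t)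
      = 4 * chi4 (int p) * (\<Sum>r\<in>{0<..<int p}. of_bool (4 dvd r - int p) * r ^ t)] (mod int p)"
    using cong_add[OF chi4_power_sum_cong_class_sum[OF assms(1-3) no_div]
        chi4_power_sum_cong_class_sum[OF assms(1-3) no_div]] by (simp add: mult.assoc)
  finally show ?thesis
    using sech_int_cong_chi4_sum[OF assms(1,2,5)] by (rule cong_trans[rotated])
qed

section \<open>The interval sums\<close>

definition S_sum_int :: "nat \<Rightarrow> nat \<Rightarrow> rat \<Rightarrow> rat \<Rightarrow> int" where
  "S_sum_int p l x y = (\<Sum>s | x * of_nat p < of_int s \<and> of_int s < y * of_nat p. s ^ l)"

lemma of_int_S_sum_int: "of_int (S_sum_int p l x y) = S_sum p l x y"
  by (simp add: S_sum_int_def S_sum_def)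

lemma finite_S_sum_range:
  fixes x y :: rat
  shows "finite {s::int. x * of_nat p < of_int s \<and> of_int s < y * of_nat p}"
proof (rule finite_subset)
  show "{s::int. x * of_nat p < of_int s \<and> of_int s < y * of_nat p}
      \<subseteq> {\<lfloor>x * of_nat p\<rfloor>..\<lceil>y * of_nat p\<rceil>}"
    by (auto simp: floor_le_iff le_ceiling_iff)
qed simp

lemma S_sum_int_split:
  assumes "x \<le> y" "y \<le> z" "\<And>s::int. of_int s \<noteq> y * of_nat p"
  shows "S_sum_int p l x z = S_sum_int p l x y + S_sum_int p l y z"
proof -
  have "{s::int. x * of_nat p < of_int s \<and> of_int s < z * of_nat p}
      = {s. x * of_nat p < of_int s \<and> of_int s < y * of_nat p}
        \<union> {s. y * of_nat p < of_int s \<and> of_int s < z * of_nat p}"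
    using assms mult_right_mono[of x y "of_nat p :: rat"] mult_right_mono[of y z "of_nat p :: rat"]
    by (auto simp: neq_iff)
  then show ?thesis
    unfolding S_sum_int_def by (subst sum.union_disjoint[symmetric]) (auto simp: finite_S_sum_range)
qed

lemma S_sum_int_eq_int_range:
  fixes a b m :: int
  assumes "m > 0"
  shows "S_sum_int p l (of_int a / of_int m) (of_int b / of_int m)
           = (\<Sum>s | a * int p < m * s \<and> m * s < b * int p. s ^ l)"
proof -
  have "of_int a / of_int m * of_nat p < (of_int s :: rat) \<longleftrightarrow> a * int p < m * s"
    "of_int s < of_int b / of_int m * (of_nat p :: rat) \<longleftrightarrow> m * s < b * int p" for s
    using assms by (simp_all add: field_simps) (metis of_int_less_iff of_int_mult of_int_of_nat_eq)+
  then show ?thesis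
    by (simp add: S_sum_int_def)
qed

lemma sum_affine_reindex:
  fixes m c :: int
  assumes "m \<noteq> 0"
  shows "(\<Sum>s | Q (m * s + c). g (m * s + c)) = (\<Sum>r | Q r \<and> m dvd r - c. g r)"
  by (rule sum.reindex_bij_witness[where i = "\<lambda>r. (r - c) div m" and j = "\<lambda>s. m * s + c"])
    (use assms in auto)

lemma S_sum_int_unit_interval_cong:
  fixes a m :: int
  assumes "m > 0"
  shows "[m ^ l * S_sum_int p l (of_int a / of_int m) (of_int (a + 1) / of_int m)
          = (\<Sum>r\<in>{0<..<int p}. of_bool (m dvd r + a * int p) * r ^ l)] (mod int p)"
proof -
  define Q where "Q r \<longleftrightarrow> 0 < r \<and> r < int p" for r
  have "m ^ l * S_sum_int p l (of_int a / of_int m) (of_int (a + 1) / of_int m)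
      = (\<Sum>s | Q (m * s + - a * int p). (m * s + - a * int p + a * int p) ^ l)"
    unfolding S_sum_int_eq_int_range[OF assms]
    by (simp add: Q_def sum_distrib_left algebra_simps flip: power_mult_distrib)
  also have "\<dots> = (\<Sum>r | Q r \<and> m dvd r + a * int p. (r + a * int p) ^ l)"
    using sum_affine_reindex[where Q = Q and c = "- a * int p" and g = "\<lambda>r. (r + a * int p) ^ l"] assms
    by simp
  also have "[\<dots> = (\<Sum>r | Q r \<and> m dvd r + a * int p. r ^ l)] (mod int p)"
    by (intro cong_sum cong_pow) (simp add: cong_iff_dvd_diff)
  also have "(\<Sum>r | Q r \<and> m dvd r + a * int p. r ^ l)
      = (\<Sum>r\<in>{0<..<int p}. of_bool (m dvd r + a * int p) * r ^ l)"
    by (simp add: Q_def sum.inter_filter[symmetric] Int_def conj_commute)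
  finally show ?thesis .
qed

lemma of_bool_mod4_class_split:
  fixes P r :: int
  assumes "odd P"
  shows "of_bool (4 dvd r - P)
           = of_bool (16 dvd P - r) + of_bool (8 dvd r + 3 * P) + (of_bool (16 dvd r + 7 * P) :: int)"
proof -
  obtain k where "P = 2 * k + 1"
    using assms by (rule oddE)
  then have "P - r = - (r - P)" "r + 3 * P = (r - P + 4) + 8 * k" "r + 7 * P = (r - P + 8) + 16 * k"
    by simp_all
  then have "16 dvd P - r \<longleftrightarrow> 16 dvd r - P" "8 dvd r + 3 * P \<longleftrightarrow> 8 dvd (r - P) + 4"
    "16 dvd r + 7 * P \<longleftrightarrow> 16 dvd (r - P) + 8"
    by (simp_all only: dvd_minus_iff dvd_add_times_triv_right_iff mult.commute)
  moreover have "4 dvd d \<longleftrightarrow> 16 dvd d \<or> 8 dvd d + 4 \<or> 16 dvd d + 8"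
    "\<not> (16 dvd d \<and> 8 dvd d + 4)" "\<not> (16 dvd d \<and> 16 dvd d + 8)"
    "\<not> (8 dvd d + 4 \<and> 16 dvd d + 8)"
    for d :: int
    by presburger+
  ultimately show ?thesis
    by auto
qed

lemma S_sum_int_combination_rescale:
  assumes "odd p"
  shows "4 ^ t * (4 ^ t * S_sum_int p t 0 (1/16) + 2 ^ t * S_sum_int p t (3/8) (7/16)
            + (2 ^ t + 4 ^ t) * S_sum_int p t (7/16) (1/2))
      = 16 ^ t * S_sum_int p t 0 (1/16) + 8 ^ t * S_sum_int p t (3/8) (1/2)
        + 16 ^ t * S_sum_int p t (7/16) (1/2)"
proof -
  have "rat_of_int s \<noteq> 7/16 * of_nat p" for s
  proof
    assume "rat_of_int s = 7/16 * of_nat p"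
    then have "rat_of_int (16 * s) = rat_of_int (7 * int p)"
      by simp
    then have "16 * s = 7 * int p"
      by (simp only: of_int_eq_iff)
    with \<open>odd p\<close> show False
      by presburger
  qed
  then have "S_sum_int p t (3/8) (1/2) = S_sum_int p t (3/8) (7/16) + S_sum_int p t (7/16) (1/2)"
    by (intro S_sum_int_split) simp_all
  then have "4 ^ t * (4 ^ t * S_sum_int p t 0 (1/16) + 2 ^ t * S_sum_int p t (3/8) (7/16)
            + (2 ^ t + 4 ^ t) * S_sum_int p t (7/16) (1/2))
      = (4 ^ t * 4 ^ t) * S_sum_int p t 0 (1/16) + (4 ^ t * 2 ^ t) * S_sum_int p t (3/8) (1/2)
        + (4 ^ t * 4 ^ t) * S_sum_int p t (7/16) (1/2)"
    by (simp only: ring_distribs mult.assoc add_ac)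
  moreover have "(4::int) ^ t * 4 ^ t = 16 ^ t" "(4::int) ^ t * 2 ^ t = 8 ^ t"
    by (simp_all flip: power_mult_distrib)
  ultimately show ?thesis
    by (simp only:)
qed

lemma S_sums_cong_class_sum:
  assumes "odd p" "even t"
  shows "[4 ^ t * (4 ^ t * S_sum_int p t 0 (1/16) + 2 ^ t * S_sum_int p t (3/8) (7/16)
            + (2 ^ t + 4 ^ t) * S_sum_int p t (7/16) (1/2))
          = (\<Sum>r\<in>{0<..<int p}. of_bool (4 dvd r - int p) * r ^ t)] (mod int p)"
proof -
  have "[16 ^ t * S_sum_int p t 0 (1/16) = (\<Sum>r\<in>{0<..<int p}. of_bool (16 dvd r) * r ^ t)] (mod int p)"
    using S_sum_int_unit_interval_cong[of 16 t p 0] by simp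
  also have "[(\<Sum>r\<in>{0<..<int p}. of_bool (16 dvd r) * r ^ t)
      = (\<Sum>r\<in>{0<..<int p}. of_bool (16 dvd int p - r) * r ^ t)] (mod int p)"
    by (rule weighted_power_sum_reflect_cong[OF assms(2)])
  finally have "[16 ^ t * S_sum_int p t 0 (1/16) + 8 ^ t * S_sum_int p t (3/8) (1/2)
            + 16 ^ t * S_sum_int p t (7/16) (1/2)
      = (\<Sum>r\<in>{0<..<int p}. of_bool (16 dvd int p - r) * r ^ t)
        + (\<Sum>r\<in>{0<..<int p}. of_bool (8 dvd r + 3 * int p) * r ^ t)
        + (\<Sum>r\<in>{0<..<int p}. of_bool (16 dvd r + 7 * int p) * r ^ t)] (mod int p)"
    using S_sum_int_unit_interval_cong[of 8 t p 3] S_sum_int_unit_interval_cong[of 16 t p 7]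
    by (intro cong_add) simp_all
  also have "(\<Sum>r\<in>{0<..<int p}. of_bool (16 dvd int p - r) * r ^ t)
        + (\<Sum>r\<in>{0<..<int p}. of_bool (8 dvd r + 3 * int p) * r ^ t)
        + (\<Sum>r\<in>{0<..<int p}. of_bool (16 dvd r + 7 * int p) * r ^ t)
      = (\<Sum>r\<in>{0<..<int p}. of_bool (4 dvd r - int p) * r ^ t)"
  proof -
    have "of_bool (4 dvd r - int p) = of_bool (16 dvd int p - r) + of_bool (8 dvd r + 3 * int p)
        + (of_bool (16 dvd r + 7 * int p) :: int)" for r
      using of_bool_mod4_class_split[of "int p" r] assms(1) by simp
    then show ?thesis
      by (simp only: distrib_right sum.distrib)
  qed
  finally show ?thesis
    unfolding S_sum_int_combination_rescale[OF assms(1)] .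
qed

lemma minus_one_power_euler_num_eq_chi4:
  assumes "odd p" "t + 2 * k = p - 1"
  shows "(-1) ^ k * euler_num t = of_int (chi4 (int p) * sech_int t)"
proof -
  have "even t" "k + t div 2 = (p - 1) div 2"
    using assms by presburger+
  then have sign: "(-1::rat) ^ k * (-1) ^ (t div 2) = of_int (chi4 (int p))"
    using assms(1) by (simp add: chi4_odd_nat flip: power_add)
  have "euler_num t = (-1) ^ (t div 2) * sech_num t"
    using \<open>even t\<close> by (simp add: sech_num_def flip: power_add mult_2)
  then have "(-1) ^ k * euler_num t = ((-1) ^ k * (-1) ^ (t div 2)) * sech_num t"
    by (simp only: mult.assoc)
  then show ?thesis
    by (simp only: sign of_int_mult of_int_sech_int)
qed

lemma fermat_four:
  assumes "prime p" "odd p"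
  shows "[4 ^ (p - 1) = 1] (mod int p)"
proof -
  have "\<not> p dvd 2 ^ 2"
    using odd_prime_not_dvd_power_2[OF assms, of 2]
    by (simp only: int_dvd_int_iff[symmetric] of_nat_power of_nat_numeral not_False_eq_True)
  then have "[int (4 ^ (p - 1)) = int 1] (mod int p)"
    using fermat_theorem[OF assms(1), of 4] by (simp only: cong_int_iff) simp
  then show ?thesis
    by simp
qed

lemma sech_int_cong_S_sum_ints:
  assumes "prime p" "odd p" "t + 2 * k = p - 1" "0 < k" "0 < t"
  shows "[chi4 (int p) * 4 ^ (2 * k - 1) * sech_int t
          = 4 ^ t * S_sum_int p t 0 (1/16) + 2 ^ t * S_sum_int p t (3/8) (7/16)
            + (2 ^ t + 4 ^ t) * S_sum_int p t (7/16) (1/2)] (mod int p)"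
    (is "[?c * 4 ^ (2 * k - 1) * sech_int t = ?R] (mod int p)")
proof -
  have "even t" "t + 1 < p"
    using assms(2-4) by presburger+
  have c_squared: "?c * ?c = 1"
    using assms(2) by (simp add: chi4_odd_nat flip: power_add mult_2)
  have four_powers: "(4::int) ^ (2 * k - 1) * 4 * 4 ^ t = 4 ^ (p - 1)"
    using assms(3,4) by (simp flip: power_add power_Suc2)
  have "[sech_int t = 4 * ?c * (4 ^ t * ?R)] (mod int p)"
    using sech_int_cong_class_sum[OF assms(1,2) \<open>even t\<close> assms(5) \<open>t + 1 < p\<close>]
      cong_scalar_left[OF S_sums_cong_class_sum[OF assms(2) \<open>even t\<close>], of "4 * ?c"]
    by (rule cong_trans[OF _ cong_sym])
  then have "[?c * 4 ^ (2 * k - 1) * sech_int t = ?c * 4 ^ (2 * k - 1) * (4 * ?c * (4 ^ t * ?R))] (mod int p)"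
    by (rule cong_scalar_left)
  also have "?c * 4 ^ (2 * k - 1) * (4 * ?c * (4 ^ t * ?R)) = (?c * ?c) * (4 ^ (2 * k - 1) * 4 * 4 ^ t) * ?R"
    by (simp only: mult_ac)
  also have "\<dots> = 4 ^ (p - 1) * ?R"
    by (simp only: c_squared four_powers mult_1)
  also have "[4 ^ (p - 1) * ?R = 1 * ?R] (mod int p)"
    by (rule cong_scalar_right[OF fermat_four[OF assms(1,2)]])
  finally show ?thesis
    by simp
qed

lemma rat_cong_of_int_iff: "rat_cong (of_int a) (of_int b) p \<longleftrightarrow> [a = b] (mod int p)"
  unfolding rat_cong_def of_int_diff[symmetric] quotient_of_rat_of_int
  by (simp add: cong_iff_dvd_diff)

theorem mainTheorem5:
  fixes p k t :: nat
  assumes "prime p" and "p \<ge> 5" and "1 \<le> k" and "2 * k \<le> p - 3"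
    and "t = p - 1 - 2 * k"
  shows "rat_cong ((-1) ^ k * 4 ^ (2 * k - 1) * euler_num t)
           (4 ^ t * S_sum p t 0 (1/16) + 2 ^ t * S_sum p t (3/8) (7/16)
            + (2 ^ t + 4 ^ t) * S_sum p t (7/16) (1/2)) p"
proof -
  have "odd p"
    using assms(1,2) by (intro prime_odd_nat) auto
  have "t + 2 * k = p - 1" "0 < k" "0 < t"
    using assms(3-5) by auto
  have "(-1) ^ k * 4 ^ (2 * k - 1) * euler_num t = of_int (chi4 (int p) * 4 ^ (2 * k - 1) * sech_int t)"
    using minus_one_power_euler_num_eq_chi4[OF \<open>odd p\<close> \<open>t + 2 * k = p - 1\<close>]
    by (simp add: mult_ac)
  moreover have "4 ^ t * S_sum p t 0 (1/16) + 2 ^ t * S_sum p t (3/8) (7/16)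
      + (2 ^ t + 4 ^ t) * S_sum p t (7/16) (1/2)
    = of_int (4 ^ t * S_sum_int p t 0 (1/16) + 2 ^ t * S_sum_int p t (3/8) (7/16)
      + (2 ^ t + 4 ^ t) * S_sum_int p t (7/16) (1/2))"
    by (simp flip: of_int_S_sum_int)
  ultimately show ?thesis
    using sech_int_cong_S_sum_ints[OF assms(1) \<open>odd p\<close> \<open>t + 2 * k = p - 1\<close> \<open>0 < k\<close> \<open>0 < t\<close>]
    by (simp only: rat_cong_of_int_iff)
qed

end
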